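(* In the two-bus model of the context, let $\boldsymbol\omega=(\overline{\mathbf q},\mathbf d)$ and $\boldsymbol\omega'=(\overline{\mathbf q},\mathbf d')$ be instances with the same generation capacities, both feasible for \textsf{ED-2b} and \textsf{SCED-2b}, such that $d_2'=d_2$, $d_1'\ge d_1$, $d_1+d_2>0$, and $\overline q_1\ge d_1'+d_2$. Then $\mathsf{PoS}(\boldsymbol\omega')\le\mathsf{PoS}(\boldsymbol\omega)$.
   Context: Two-bus network: buses $v_1,v_2$ joined by two parallel lines $e_1,e_2$ with susceptances $B_1,B_2>0$ and thermal limits $\overline f_1,\overline f_2>0$. Bus $i\in\{1,2\}$ has a generator with capacity $\overline q_i\ge 0$ and linear cost $\alpha_i q_i$, and a demand $d_i\ge 0$; throughout $0<\alpha_1\le\alpha_2$ (bus 1 is the cheap bus). An instance is $\boldsymbol\omega=(\overline{\mathbf q},\mathbf d)$ with $\overline{\mathbf q}=(\overline q_1,\overline q_2)$, $\mathbf d=(d_1,d_2)$. Define $f^{\mathsf{ed}}:=(B_1+B_2)\min\{\overline f_1/B_1,\overline f_2/B_2\}$ and $f^{\mathsf{sc}}:=\min\{\overline f_1,\overline f_2\}$ (note $f^{\mathsf{sc}}\le f^{\mathsf{ed}}$). The economic dispatch problem \textsf{ED-2b} is: minimize $\alpha_1q_1+\alpha_2q_2$ over $(q_1,q_2)$ subject to $0\le q_1\le\overline q_1$, $0\le q_2\le\overline q_2$, $q_1+q_2=d_1+d_2$, and $-f^{\mathsf{ed}}\le q_1-d_1\le f^{\mathsf{ed}}$. The security-constrained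 problem \textsf{SCED-2b} is the same problem with the additional constraint $-f^{\mathsf{sc}}\le q_1-d_1\le f^{\mathsf{sc}}$. Let $c^\star_{\mathsf{ed}}(\boldsymbol\omega)$ and $c^\star_{\mathsf{sc}}(\boldsymbol\omega)$ be the optimal values of \textsf{ED-2b} and \textsf{SCED-2b} for an instance $\boldsymbol\omega$ feasible for both. The price of security of $\boldsymbol\omega$ is $\mathsf{PoS}(\boldsymbol\omega):=c^\star_{\mathsf{sc}}(\boldsymbol\omega)/c^\star_{\mathsf{ed}}(\boldsymbol\omega)$. *)

theory Defs
  imports "HOL-Analysis.Analysis"
begin

text \<open>Two-bus network. Line data: susceptances B1 B2, thermal limits f1 f2.
  Instance: capacities (qb1, qb2) and demands (d1, d2).\<close>

definition f_ed :: "real \<Rightarrow> real \<Rightarrow> real \<Rightarrow> real \<Rightarrow> real" where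
  "f_ed B1 B2 f1 f2 = (B1 + B2) * min (f1 / B1) (f2 / B2)"

definition f_sc :: "real \<Rightarrow> real \<Rightarrow> real" where
  "f_sc f1 f2 = min f1 f2"

definition ed_feas :: "real \<Rightarrow> real \<times> real \<Rightarrow> real \<times> real \<Rightarrow> (real \<times> real) set" where
  "ed_feas F qb d = {(q1, q2). 0 \<le> q1 \<and> q1 \<le> fst qb \<and> 0 \<le> q2 \<and> q2 \<le> snd qb
      \<and> q1 + q2 = fst d + snd d \<and> - F \<le> q1 - fst d \<and> q1 - fst d \<le> F}"

definition ED_feasible_set where
  "ED_feasible_set B1 B2 f1 f2 qb d = ed_feas (f_ed B1 B2 f1 f2) qb d"

definition SCED_feasible_set where
  "SCED_feasible_set B1 B2 f1 f2 qb d =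
     ed_feas (f_ed B1 B2 f1 f2) qb d \<inter>
     {(q1, q2). - f_sc f1 f2 \<le> q1 - fst d \<and> q1 - fst d \<le> f_sc f1 f2}"

definition cost :: "real \<Rightarrow> real \<Rightarrow> real \<times> real \<Rightarrow> real" where
  "cost a1 a2 q = a1 * fst q + a2 * snd q"

text \<open>Optimal values (infimum of the cost over the feasible set; attained for
  feasible instances since the feasible sets are nonempty compact polytopes).\<close>
definition c_ed where
  "c_ed a1 a2 B1 B2 f1 f2 qb d = (INF q \<in> ED_feasible_set B1 B2 f1 f2 qb d. cost a1 a2 q)"

definition c_sc where
  "c_sc a1 a2 B1 B2 f1 f2 qb d = (INF q \<in> SCED_feasible_set B1 B2 f1 f2 qb d. cost a1 a2 q)"

definition PoS where
  "PoS a1 a2 B1 B2 f1 f2 qb d = c_sc a1 a2 B1 B2 f1 f2 qb d / c_ed a1 a2 B1 B2 f1 f2 qb d"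

end

theory Submission
  imports Defs
begin

text \<open>When bus 1 can cover the whole demand, the optimum serves \<open>d1\<close> and as much of \<open>d2\<close> as
  the flow limit \<open>F\<close> allows from the cheap bus, so its value is \<open>a1 d1 + g F\<close> with
  \<open>g F = a1 m + a2 (d2 - m)\<close>, \<open>m = min d2 F\<close>. Since \<open>g\<close> is antitone and \<open>f_sc \<le> f_ed\<close>, the
  price of security has the form \<open>(a1 d1 + A) / (a1 d1 + B)\<close> with \<open>A \<ge> B\<close> independent of \<open>d1\<close>;
  such a ratio decreases as \<open>d1\<close> grows.\<close>

lemma f_sc_le_f_ed:
  fixes B1 B2 f1 f2 :: real
  assumes "B1 > 0" "B2 > 0" "f1 \<ge> 0" "f2 \<ge> 0"
  shows "f_sc f1 f2 \<le> f_ed B1 B2 f1 f2"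
proof -
  have "f1 \<le> (B1 + B2) * (f1 / B1)" "f2 \<le> (B1 + B2) * (f2 / B2)"
    using assms by (simp_all add: field_simps)
  then show ?thesis
    unfolding f_sc_def f_ed_def min_def by auto
qed

lemma SCED_feasible_set_eq_ed_feas:
  assumes "f_sc f1 f2 \<le> f_ed B1 B2 f1 f2"
  shows "SCED_feasible_set B1 B2 f1 f2 qb d = ed_feas (f_sc f1 f2) qb d"
  using assms unfolding SCED_feasible_set_def ed_feas_def by auto

lemma ed_feas_optimal_value:
  assumes "F \<ge> 0" "ed_feas F qb d \<noteq> {}" "fst qb \<ge> fst d + snd d"
    and "a1 \<le> a2" "snd d \<ge> 0"
  shows "(INF q \<in> ed_feas F qb d. cost a1 a2 q) =
     a1 * (fst d + min (snd d) F) + a2 * (snd d - min (snd d) F)"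
proof -
  define m where "m = min (snd d) F"
  define q\<^sub>0 where "q\<^sub>0 = (fst d + m, snd d - m)"
  obtain p1 p2 where "(p1, p2) \<in> ed_feas F qb d"
    using assms(2) by auto
  \<comment> \<open>any feasible point certifies \<open>snd d - m \<le> snd qb\<close>\<close>
  then have q\<^sub>0_feasible: "q\<^sub>0 \<in> ed_feas F qb d"
    using assms unfolding ed_feas_def m_def q\<^sub>0_def by auto
  have q\<^sub>0_minimal: "cost a1 a2 q\<^sub>0 \<le> cost a1 a2 (q1, q2)" if "(q1, q2) \<in> ed_feas F qb d" for q1 q2
  proof -
    have "q1 \<le> fst d + m" and q2: "q2 = fst d + snd d - q1"
      using that unfolding ed_feas_def m_def by auto
    have "cost a1 a2 (q1, q2) - cost a1 a2 q\<^sub>0 = (a2 - a1) * (fst d + m - q1)"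
      unfolding cost_def q\<^sub>0_def q2 by (simp add: algebra_simps)
    also have "\<dots> \<ge> 0"
      using assms(4) \<open>q1 \<le> fst d + m\<close> by simp
    finally show ?thesis by simp
  qed
  have "(INF q \<in> ed_feas F qb d. cost a1 a2 q) = cost a1 a2 q\<^sub>0"
    by (rule cInf_eq_minimum) (use q\<^sub>0_feasible q\<^sub>0_minimal in auto)
  then show ?thesis
    by (simp add: cost_def q\<^sub>0_def m_def)
qed

lemma c_ed_eq:
  assumes "B1 > 0" "B2 > 0" "f1 \<ge> 0" "f2 \<ge> 0" "a1 \<le> a2" "snd d \<ge> 0"
    and "fst qb \<ge> fst d + snd d" "ED_feasible_set B1 B2 f1 f2 qb d \<noteq> {}"
  shows "c_ed a1 a2 B1 B2 f1 f2 qb d = a1 * fst d +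
     (a1 * min (snd d) (f_ed B1 B2 f1 f2) + a2 * (snd d - min (snd d) (f_ed B1 B2 f1 f2)))"
proof -
  have "f_ed B1 B2 f1 f2 \<ge> 0"
    using assms(3,4) f_sc_le_f_ed[OF assms(1-4)] by (simp add: f_sc_def)
  then show ?thesis
    using assms(5-8) unfolding c_ed_def ED_feasible_set_def
    by (simp add: ed_feas_optimal_value algebra_simps)
qed

lemma c_sc_eq:
  assumes "B1 > 0" "B2 > 0" "f1 \<ge> 0" "f2 \<ge> 0" "a1 \<le> a2" "snd d \<ge> 0"
    and "fst qb \<ge> fst d + snd d" "SCED_feasible_set B1 B2 f1 f2 qb d \<noteq> {}"
  shows "c_sc a1 a2 B1 B2 f1 f2 qb d = a1 * fst d +
     (a1 * min (snd d) (f_sc f1 f2) + a2 * (snd d - min (snd d) (f_sc f1 f2)))"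
proof -
  note sc_feasible = SCED_feasible_set_eq_ed_feas[OF f_sc_le_f_ed[OF assms(1-4)]]
  have "f_sc f1 f2 \<ge> 0"
    using assms(3,4) by (simp add: f_sc_def)
  then show ?thesis
    using assms(5-8) unfolding c_sc_def sc_feasible
    by (simp add: ed_feas_optimal_value algebra_simps)
qed

lemma add_divide_add_antimono:
  fixes x y A B :: "'a::linordered_field"
  assumes "0 < x + B" "x \<le> y" "B \<le> A"
  shows "(y + A) / (y + B) \<le> (x + A) / (x + B)"
proof -
  have "(x + A) * (y + B) - (y + A) * (x + B) = (A - B) * (y - x)"
    by (simp add: algebra_simps)
  also have "\<dots> \<ge> 0"
    using assms by simp
  finally show ?thesis
    using assms by (simp add: divide_simps)
qed

lemma redispatch_cost_antimono:
  fixes a1 a2 d2 F F' :: real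
  assumes "a1 \<le> a2" "F \<le> F'"
  shows "a1 * min d2 F' + a2 * (d2 - min d2 F') \<le> a1 * min d2 F + a2 * (d2 - min d2 F)"
proof -
  have "min d2 F \<le> min d2 F'"
    using assms(2) by linarith
  then have "0 \<le> (a2 - a1) * (min d2 F' - min d2 F)"
    using assms(1) by simp
  then show ?thesis
    by (simp add: algebra_simps)
qed

theorem lemma2:
  fixes a1 a2 B1 B2 f1 f2 :: real and qb d d' :: "real \<times> real"
  assumes "B1 > 0" "B2 > 0" "f1 > 0" "f2 > 0"
    and "0 < a1" "a1 \<le> a2"
    and "fst qb \<ge> 0" "snd qb \<ge> 0"
    and "fst d \<ge> 0" "snd d \<ge> 0" "fst d' \<ge> 0" "snd d' \<ge> 0"
    and "ED_feasible_set B1 B2 f1 f2 qb d \<noteq> {}"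
    and "SCED_feasible_set B1 B2 f1 f2 qb d \<noteq> {}"
    and "ED_feasible_set B1 B2 f1 f2 qb d' \<noteq> {}"
    and "SCED_feasible_set B1 B2 f1 f2 qb d' \<noteq> {}"
    and "snd d' = snd d" "fst d' \<ge> fst d" "fst d + snd d > 0"
    and "fst qb \<ge> fst d' + snd d"
  shows "PoS a1 a2 B1 B2 f1 f2 qb d' \<le> PoS a1 a2 B1 B2 f1 f2 qb d"
proof -
  define g where "g F = a1 * min (snd d) F + a2 * (snd d - min (snd d) F)" for F
  have sc_le_ed: "f_sc f1 f2 \<le> f_ed B1 B2 f1 f2"
    using assms(1-4) by (simp add: f_sc_le_f_ed)
  have optimal_values: "c_ed a1 a2 B1 B2 f1 f2 qb x = a1 * fst x + g (f_ed B1 B2 f1 f2)"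
    "c_sc a1 a2 B1 B2 f1 f2 qb x = a1 * fst x + g (f_sc f1 f2)"
    if "snd x = snd d" "fst x + snd d \<le> fst qb"
      "ED_feasible_set B1 B2 f1 f2 qb x \<noteq> {}" "SCED_feasible_set B1 B2 f1 f2 qb x \<noteq> {}" for x
    using that assms(1-4,6,10) by (simp_all add: c_ed_eq c_sc_eq g_def)
  have "g (f_ed B1 B2 f1 f2) \<le> g (f_sc f1 f2)"
    unfolding g_def using assms(6) sc_le_ed by (rule redispatch_cost_antimono)
  moreover have "a1 * snd d \<le> g (f_ed B1 B2 f1 f2)"
  proof -
    have "a1 * (snd d - min (snd d) (f_ed B1 B2 f1 f2)) \<le> a2 * (snd d - min (snd d) (f_ed B1 B2 f1 f2))"
      using assms(6) by (simp add: mult_right_mono)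
    then show ?thesis
      by (simp add: g_def algebra_simps)
  qed
  moreover have "0 < a1 * fst d + a1 * snd d"
    using assms(5,19) by (simp flip: distrib_left)
  ultimately show ?thesis
    using assms(5,18) optimal_values[of d] optimal_values[of d'] assms(13-17,20) unfolding PoS_def
    by (simp add: add_divide_add_antimono)
qed

end
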